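(* Let $\ell\in\mathbb N$ and let $\Gamma_2$ be a finite alphabet disjoint from $\Gamma_1=\{0,1,\mathsf{inc},\mathsf{dec}\}$. There is a pushdown automaton $A$ over $\Gamma_1\cup\Gamma_2$ with 3 states and a stack alphabet of two symbols such that the projection of $L(A)\cap L'_\ell$ onto the alphabet $\Gamma_2$ (erasing all letters of $\Gamma_1$) is exactly $(\Gamma_2)^{2^{2^\ell}}$.
   Context: A pushdown automaton has transitions labelled by a letter or $\epsilon$ and a stack operation (push a symbol, pop a symbol, or no operation); it accepts a word if there is a run from the initial state with empty stack reading the word and ending in a final state with empty stack. For a word $b_1\cdots b_\ell\in\{0,1\}^\ell$ let $\mathsf{val}(b_1\cdots b_\ell)=\sum_i b_i 2^{\ell-i}$. Interpret $\mathsf{inc}(n)=n+1$, $\mathsf{dec}(n)=n-1$ and $a(n)=n$ for $a\in\Gamma_2$. $L'_\ell$ is the set of words $n_0o_1n_1\cdots o_kn_k$ with $k\ge 0$, each $n_i\in\{0,1\}^\ell$, each $o_i\in\{\mathsf{inc},\mathsf{dec}\}\cup\Gamma_2$, such that $\mathsf{val}(n_i)=o_i(\mathsf{val}(n_{i-1}))$ for all $0<i\le k$, $n_0=0^\ell=n_k$, if $o_i=\mathsf{inc}$ then $n_{i-1}\ne 1^\ell$, and if $o_i=\mathsf{dec}$ then $n_{i-1}\ne 0^\ell$. *)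

theory Defs
  imports Main
begin

datatype 'g letter = Zero | One | Inc | Dec | G 'g

datatype 's stackop = Push 's | Pop 's | Nop

record ('q, 's, 'a) pda =
  states :: "'q set"
  stack_alph :: "'s set"
  delta :: "('q \<times> 'a option \<times> 's stackop \<times> 'q) set"
  init :: 'q
  final :: "'q set"

definition pda_wf :: "('q, 's, 'a) pda \<Rightarrow> bool" where
  "pda_wf A \<longleftrightarrow> finite (states A) \<and> finite (stack_alph A) \<and>
     init A \<in> states A \<and> final A \<subseteq> states A \<and>
     (\<forall>(q, a, op, q') \<in> delta A. q \<in> states A \<and> q' \<in> states A \<and>
        (\<forall>s. op = Push s \<longrightarrow> s \<in> stack_alph A) \<and>
        (\<forall>s. op = Pop s \<longrightarrow> s \<in> stack_alph A))"

text \<open>Effect of a stack operation (top of stack = head of list).\<close>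
fun apply_op :: "'s stackop \<Rightarrow> 's list \<Rightarrow> 's list option" where
  "apply_op (Push s) st = Some (s # st)"
| "apply_op (Pop s) [] = None"
| "apply_op (Pop s) (t # st) = (if t = s then Some st else None)"
| "apply_op Nop st = Some st"

inductive run :: "('q, 's, 'a) pda \<Rightarrow> 'q \<Rightarrow> 's list \<Rightarrow> 'a list \<Rightarrow> 'q \<Rightarrow> 's list \<Rightarrow> bool"
  for A where
  run_nil: "run A q st [] q st"
| run_letter: "\<lbrakk>(q, Some a, op, q') \<in> delta A; apply_op op st = Some st';
     run A q' st' w q'' st''\<rbrakk> \<Longrightarrow> run A q st (a # w) q'' st''"
| run_eps: "\<lbrakk>(q, None, op, q') \<in> delta A; apply_op op st = Some st';
     run A q' st' w q'' st''\<rbrakk> \<Longrightarrow> run A q st w q'' st''"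

definition lang :: "('q, 's, 'a) pda \<Rightarrow> 'a list set" where
  "lang A = {w. \<exists>qf \<in> final A. run A (init A) [] w qf []}"

definition bitword :: "nat \<Rightarrow> 'g letter list \<Rightarrow> bool" where
  "bitword l n \<longleftrightarrow> length n = l \<and> set n \<subseteq> {Zero, One}"

definition val :: "'g letter list \<Rightarrow> nat" where
  "val bs = (\<Sum>i<length bs. (if bs ! i = One then 1 else 0) * 2 ^ (length bs - 1 - i))"

definition is_op :: "'g letter \<Rightarrow> bool" where
  "is_op o' \<longleftrightarrow> o' = Inc \<or> o' = Dec \<or> (\<exists>g. o' = G g)"

fun op_val :: "'g letter \<Rightarrow> nat \<Rightarrow> nat" where
  "op_val Inc n = n + 1"
| "op_val Dec n = n - 1"
| "op_val _ n = n"

definition Lprime :: "nat \<Rightarrow> 'g letter list set" where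
  "Lprime l = {w. \<exists>(ns :: 'g letter list list) (os :: 'g letter list).
     length ns = Suc (length os) \<and>
     w = ns ! 0 @ concat (map (\<lambda>i. os ! i # ns ! Suc i) [0..<length os]) \<and>
     (\<forall>n \<in> set ns. bitword l n) \<and>
     ns ! 0 = replicate l Zero \<and> ns ! length os = replicate l Zero \<and>
     (\<forall>i < length os. is_op (os ! i) \<and>
        val (ns ! Suc i) = op_val (os ! i) (val (ns ! i)) \<and>
        (os ! i = Inc \<longrightarrow> ns ! i \<noteq> replicate l One) \<and>
        (os ! i = Dec \<longrightarrow> ns ! i \<noteq> replicate l Zero))}"

definition proj :: "'g letter list \<Rightarrow> 'g list" where
  "proj w = concat (map (\<lambda>c. case c of G g \<Rightarrow> [g] | _ \<Rightarrow> []) w)"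

end

theory Submission
  imports Defs
begin

(* Put N = 2^l - 1 and read the counter of a word of L'_l as the depth in a complete binary
   tree whose nodes at depth N each carry two leaves. The automaton accepts exactly the words
   of L'_l that traverse this tree depth first and read one Gamma_2-letter per leaf: inc
   descends and dec ascends, and Gamma_2-letters can only be read after a block of ones,
   i.e. at depth N. Soundness is a potential argument: the number of leaves still to be
   visited, read off the configuration, drops by one with every Gamma_2-letter, starts at
   2^(N+1) = 2^(2^l) and ends at 0. Completeness: the depth-first traversal can carry any
   word of length 2^(2^l) on its leaves. *)

lemma val_Nil [simp]: "val [] = 0"
  by (simp add: val_def)

lemma val_Cons: "val (x # xs) = (if x = One then 2 ^ length xs else 0) + val xs"
  unfolding val_def length_Cons sum.lessThan_Suc_shift by (simp del: sum.lessThan_Suc)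

lemma val_less: "val bs < 2 ^ length bs"
  by (induction bs) (auto simp: val_Cons)

lemma val_bitword_le: "bitword l n \<Longrightarrow> val n \<le> 2 ^ l - 1"
  using val_less[of n] by (simp add: bitword_def)

lemma val_replicate_Zero [simp]: "val (replicate l Zero) = 0"
  by (induction l) (simp_all add: val_Cons)

lemma val_replicate_One [simp]: "val (replicate l One) = 2 ^ l - 1"
  by (induction l) (simp_all add: val_Cons)

lemma bitword_replicate [simp]: "bitword l (replicate l Zero)" "bitword l (replicate l One)"
  by (auto simp: bitword_def)

lemma bitword_val_inject:
  "bitword l n \<Longrightarrow> bitword l m \<Longrightarrow> val n = val m \<longleftrightarrow> n = m"
proof (induction n arbitrary: l m)
  case Nil
  then show ?case by (simp add: bitword_def)
next
  case (Cons x xs)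
  then obtain y ys where m: "m = y # ys" and len: "length ys = length xs"
    by (cases m) (auto simp: bitword_def)
  have bits: "x \<in> {Zero, One}" "y \<in> {Zero, One}" "bitword (length xs) xs" "bitword (length xs) ys"
    using Cons.prems m len by (auto simp: bitword_def)
  have "val xs < 2 ^ length xs" "val ys < 2 ^ length xs"
    using val_less[of xs] val_less[of ys] len by auto
  then have "val (x # xs) = val m \<longleftrightarrow> x = y \<and> val xs = val ys"
    using bits(1,2) by (auto simp: m len val_Cons)
  then show ?case using Cons.IH[OF bits(3,4)] m by simp
qed

lemma val_bitword_all_One: "bitword l n \<Longrightarrow> set n \<subseteq> {One} \<Longrightarrow> val n = 2 ^ l - 1"
  by (metis bitword_def replicate_eqI singletonD subset_iff val_replicate_One)

fun bin_word :: "nat \<Rightarrow> nat \<Rightarrow> 'g letter list" where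
  "bin_word 0 v = []"
| "bin_word (Suc l) v = (if 2 ^ l \<le> v then One else Zero) # bin_word l (v mod 2 ^ l)"

lemma length_bin_word [simp]: "length (bin_word l v) = l"
  by (induction l arbitrary: v) auto

lemma set_bin_word: "set (bin_word l v) \<subseteq> {Zero, One}"
  by (induction l arbitrary: v) auto

lemma bitword_bin_word: "bitword l (bin_word l v)"
  using set_bin_word by (simp add: bitword_def)

lemma val_bin_word: "v < 2 ^ l \<Longrightarrow> val (bin_word l v) = v"
proof (induction l arbitrary: v)
  case 0
  then show ?case by simp
next
  case (Suc l)
  with Suc.IH[of "v mod 2 ^ l"] show ?case
    by (auto simp: val_Cons le_mod_geq)
qed

lemma bin_word_zero: "bin_word l 0 = replicate l Zero"
  using bitword_val_inject[of l "bin_word l 0" "replicate l Zero"]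
  by (simp add: bitword_bin_word val_bin_word)

lemma proj_Nil [simp]: "proj [] = []"
  by (simp add: proj_def)

lemma proj_Cons [simp]: "proj (x # xs) = (case x of G g \<Rightarrow> [g] | _ \<Rightarrow> []) @ proj xs"
  by (simp add: proj_def)

lemma proj_append [simp]: "proj (xs @ ys) = proj xs @ proj ys"
  by (simp add: proj_def)

lemma proj_bits: "set bs \<subseteq> {Zero, One} \<Longrightarrow> proj bs = []"
  by (induction bs) auto

lemma proj_bin_word [simp]: "proj (bin_word l d) = []"
  by (rule proj_bits[OF set_bin_word])

lemma apply_op_Pop_eq_Some [simp]: "apply_op (Pop s) st = Some st' \<longleftrightarrow> st = s # st'"
  by (cases st) auto

lemma run_append:
  "run A q st u q' st' \<Longrightarrow> run A q' st' v q'' st'' \<Longrightarrow> run A q st (u @ v) q'' st''"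
  by (induction rule: run.induct) (auto intro: run.intros)

lemma run_self_loops:
  "(\<And>a. a \<in> set w \<Longrightarrow> (q, Some a, Nop, q) \<in> delta A) \<Longrightarrow> run A q st w q st"
  by (induction w) (auto intro: run.run_nil run.run_letter[where op = Nop, OF _ apply_op.simps(4)])

lemma run_append_letter:
  "run A q st u q1 st1 \<Longrightarrow> (q1, Some a, op, q2) \<in> delta A \<Longrightarrow> apply_op op st1 = Some st2 \<Longrightarrow>
   run A q2 st2 v q'' st'' \<Longrightarrow> run A q st (u @ a # v) q'' st''"
  by (rule run_append) (auto intro: run_letter)

lemma run_split_letter:
  assumes "run A q st (u @ a # v) q'' st''"
  shows "\<exists>q1 st1 op q2 st2. run A q st u q1 st1 \<and> (q1, Some a, op, q2) \<in> delta A \<and>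
           apply_op op st1 = Some st2 \<and> run A q2 st2 v q'' st''"
  using assms
proof (induction q st "u @ a # v" q'' st'' arbitrary: u rule: run.induct)
  case run_nil
  then show ?case by simp
next
  case (run_letter q b op q' st st' w q'' st'')
  show ?case
  proof (cases u)
    case Nil
    with run_letter have "b = a" "w = v" by auto
    with run_letter.hyps(1-3) \<open>u = []\<close> show ?thesis by (blast intro: run.run_nil)
  next
    case (Cons c u')
    with run_letter obtain q1 st1 op' q2 st2 where prefix: "run A q' st' u' q1 st1"
      and rest: "(q1, Some a, op', q2) \<in> delta A" "apply_op op' st1 = Some st2"
        "run A q2 st2 v q'' st''"
      by auto
    from prefix run_letter Cons have "run A q st u q1 st1"
      by (auto intro: run.run_letter)
    with rest show ?thesis by blast
  qed
next
  case (run_eps q op q' st st' q'' st'')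
  then show ?case by (blast intro: run.intros)
qed

section \<open>The language L'_l as a set of counter walks\<close>

definition counter_step :: "nat \<Rightarrow> 'g letter list \<Rightarrow> 'g letter \<Rightarrow> 'g letter list \<Rightarrow> bool" where
  "counter_step l n o' m \<longleftrightarrow> bitword l m \<and> is_op o' \<and> val m = op_val o' (val n) \<and>
     (o' = Inc \<longrightarrow> val n \<noteq> 2 ^ l - 1) \<and> (o' = Dec \<longrightarrow> val n \<noteq> 0)"

fun counter_walk ::
  "nat \<Rightarrow> 'g letter list \<Rightarrow> ('g letter \<times> 'g letter list) list \<Rightarrow> 'g letter list \<Rightarrow> bool" where
  "counter_walk l n [] n' \<longleftrightarrow> n = n'"
| "counter_walk l n ((o', m) # ps) n' \<longleftrightarrow> counter_step l n o' m \<and> counter_walk l m ps n'"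

definition steps_word :: "('g letter \<times> 'g letter list) list \<Rightarrow> 'g letter list" where
  "steps_word ps = concat (map (\<lambda>(o', m). o' # m) ps)"

lemma steps_word_simps [simp]:
  "steps_word [] = []"
  "steps_word ((o', m) # ps) = o' # m @ steps_word ps"
  "steps_word (ps @ ps') = steps_word ps @ steps_word ps'"
  by (simp_all add: steps_word_def)

lemma counter_walk_append:
  "counter_walk l n ps m \<Longrightarrow> counter_walk l m ps' k \<Longrightarrow> counter_walk l n (ps @ ps') k"
  by (induction ps arbitrary: n) auto

lemma counter_walk_iff_nth:
  assumes "length ns = Suc (length os)"
  shows "counter_walk l (hd ns) (zip os (tl ns)) (last ns) \<longleftrightarrow>
         (\<forall>i < length os. counter_step l (ns ! i) (os ! i) (ns ! Suc i))"
  using assms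
proof (induction os arbitrary: ns)
  case Nil
  then show ?case by (cases ns) auto
next
  case (Cons o' os)
  then obtain n m ms where "ns = n # m # ms"
    by (metis Suc_length_conv)
  with Cons.IH[of "m # ms"] Cons.prems show ?case by (simp add: All_less_Suc2)
qed

lemma steps_word_zip_conv_nth:
  assumes "length ns = Suc (length os)"
  shows "steps_word (zip os (tl ns)) = concat (map (\<lambda>i. os ! i # ns ! Suc i) [0..<length os])"
proof -
  have "map (\<lambda>(o', m). o' # m) (zip os (tl ns)) = map (\<lambda>i. os ! i # ns ! Suc i) [0..<length os]"
    using assms by (intro nth_equalityI) (auto simp: nth_tl)
  then show ?thesis by (simp add: steps_word_def)
qed

lemma counter_walk_last: "counter_walk l n ps n' \<Longrightarrow> last (n # map snd ps) = n'"
  by (induction ps arbitrary: n) auto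

lemma counter_walk_bitwords: "counter_walk l n ps n' \<Longrightarrow> \<forall>m \<in> set (map snd ps). bitword l m"
  by (induction ps arbitrary: n) (fastforce simp: counter_step_def)+

lemma Lprime_counter_walkE:
  assumes "w \<in> Lprime l"
  obtains ps where "w = replicate l Zero @ steps_word ps"
    and "counter_walk l (replicate l Zero) ps (replicate l Zero)"
proof -
  from assms obtain ns os where len: "length ns = Suc (length os)"
    and w: "w = ns ! 0 @ concat (map (\<lambda>i. os ! i # ns ! Suc i) [0..<length os])"
    and bits: "\<forall>n \<in> set ns. bitword l n"
    and first: "ns ! 0 = replicate l Zero" and final: "ns ! length os = replicate l Zero"
    and steps: "\<forall>i < length os. is_op (os ! i) \<and>
        val (ns ! Suc i) = op_val (os ! i) (val (ns ! i)) \<and>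
        (os ! i = Inc \<longrightarrow> ns ! i \<noteq> replicate l One) \<and>
        (os ! i = Dec \<longrightarrow> ns ! i \<noteq> replicate l Zero)"
    unfolding Lprime_def by blast
  have "counter_step l (ns ! i) (os ! i) (ns ! Suc i)" if "i < length os" for i
  proof -
    have "bitword l (ns ! i)" "bitword l (ns ! Suc i)"
      using bits len that by simp_all
    then show ?thesis
      using steps that bitword_val_inject[of l "ns ! i" "replicate l One"]
        bitword_val_inject[of l "ns ! i" "replicate l Zero"]
      by (auto simp: counter_step_def)
  qed
  then have "counter_walk l (hd ns) (zip os (tl ns)) (last ns)"
    using counter_walk_iff_nth[OF len] by blast
  moreover have "ns \<noteq> []"
    using len by auto
  then have "hd ns = replicate l Zero" "last ns = replicate l Zero"
    using len first final by (simp_all add: hd_conv_nth last_conv_nth)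
  moreover have "w = replicate l Zero @ steps_word (zip os (tl ns))"
    using w first by (simp add: steps_word_zip_conv_nth[OF len])
  ultimately show thesis
    using that by simp
qed

lemma counter_walk_in_Lprime:
  assumes walk: "counter_walk l (replicate l Zero) ps (replicate l Zero)"
  shows "replicate l Zero @ steps_word ps \<in> Lprime l"
proof -
  define ns where "ns = replicate l Zero # map snd ps"
  define os where "os = map fst ps"
  have len: "length ns = Suc (length os)" and ps: "ps = zip os (tl ns)"
    by (simp_all add: ns_def os_def zip_map_fst_snd)
  have bits: "\<forall>n \<in> set ns. bitword l n"
    using counter_walk_bitwords[OF walk] by (simp add: ns_def)
  have first: "hd ns = replicate l Zero"
    by (simp add: ns_def)
  have last: "last ns = replicate l Zero"
    using counter_walk_last[OF walk] by (simp add: ns_def)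
  then have final: "ns ! length os = replicate l Zero"
    using len by (subst (asm) last_conv_nth) auto
  from walk have "counter_walk l (hd ns) (zip os (tl ns)) (last ns)"
    by (simp only: first last ps[symmetric])
  then have step: "counter_step l (ns ! i) (os ! i) (ns ! Suc i)" if "i < length os" for i
    using counter_walk_iff_nth[OF len] that by blast
  have steps: "is_op (os ! i) \<and> val (ns ! Suc i) = op_val (os ! i) (val (ns ! i)) \<and>
      (os ! i = Inc \<longrightarrow> ns ! i \<noteq> replicate l One) \<and>
      (os ! i = Dec \<longrightarrow> ns ! i \<noteq> replicate l Zero)" if "i < length os" for i
    using step[OF that] by (auto simp: counter_step_def)
  have "replicate l Zero @ steps_word ps =
      ns ! 0 @ concat (map (\<lambda>i. os ! i # ns ! Suc i) [0..<length os])"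
    by (simp add: ns_def steps_word_zip_conv_nth[OF len, folded ps])
  moreover have "ns ! 0 = replicate l Zero"
    by (simp add: ns_def)
  ultimately show ?thesis
    unfolding Lprime_def using len bits final steps by blast
qed

(* State 0 descends (and reads the leaves), state 1 must read inc next, state 2 ascends. The
   stack holds a 0 for every level descended, so its number of 0s is the counter value; a 1
   on top of a level marks that the right subtree there is still to be visited, and between
   the two leaves of a node of depth N a 1 is pushed and popped again. *)
definition tree_pda :: "(nat, nat, 'g letter) pda" where
  "tree_pda =
    \<lparr>states = {0, 1, 2}, stack_alph = {0, 1},
     delta = {(0, Some One, Nop, 0), (0, None, Push 1, 1),
              (1, Some Zero, Nop, 1), (1, Some One, Nop, 1), (1, Some Inc, Push 0, 0),
              (2, Some Zero, Nop, 2), (2, Some One, Nop, 2), (2, None, Pop 1, 1),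
              (2, Some Dec, Pop 0, 2)}
             \<union> range (\<lambda>g. (0, Some (G g), Push 1, 0)) \<union> range (\<lambda>g. (0, Some (G g), Pop 1, 2)),
     init = 0, final = {2}\<rparr>"

lemma tree_pda_wf: "pda_wf tree_pda"
  by (auto simp: pda_wf_def tree_pda_def)

lemma tree_pda_run_bits:
  assumes "run tree_pda q st w q' st'" and "set w \<subseteq> {Zero, One}"
  shows "q' = q \<and> st' = st \<and> (q = 0 \<longrightarrow> set w \<subseteq> {One}) \<or>
         q = 0 \<and> q' = 1 \<and> st' = 1 # st \<or>
         q = 2 \<and> q' = 1 \<and> st = 1 # st'"
  using assms
proof (induction rule: run.induct)
  case (run_letter q a op q' st st' w q'' st'')
  then show ?case by (auto simp: tree_pda_def)
next
  case (run_eps q op q' st st' w q'' st'')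
  then show ?case by (auto simp: tree_pda_def)
qed simp

lemma tree_pda_run_final:
  "run tree_pda q st n 2 [] \<Longrightarrow> set n \<subseteq> {Zero, One} \<Longrightarrow> q = 2 \<and> st = []"
  by (drule (1) tree_pda_run_bits) simp

lemma tree_pda_run_loops:
  "set n \<subseteq> {Zero, One} \<Longrightarrow> q \<in> {1, 2} \<Longrightarrow> run tree_pda q st n q st"
  "set n \<subseteq> {One} \<Longrightarrow> run tree_pda 0 st n 0 st"
  by (auto intro!: run_self_loops simp: tree_pda_def)

(* The effect of a block of bits followed by an operation letter, starting in state 0 or 2;
   the flag tells whether the block consists of ones only, i.e. the counter is maximal. *)
inductive op_move :: "bool \<Rightarrow> nat \<Rightarrow> nat list \<Rightarrow> 'g letter \<Rightarrow> nat \<Rightarrow> nat list \<Rightarrow> bool" where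
  leaf_push: "op_move True 0 st (G g) 0 (1 # st)"
| leaf_pop: "op_move True 0 (1 # st) (G g) 2 st"
| descend_left: "op_move full 0 st Inc 0 (0 # 1 # st)"
| descend_right: "op_move full 2 (1 # st) Inc 0 (0 # st)"
| ascend: "op_move full 2 (0 # st) Dec 2 st"

lemma tree_pda_run_op:
  assumes run: "run tree_pda q st (n @ o' # w) 2 []"
    and bits: "set n \<subseteq> {Zero, One}" and op: "o' \<notin> {Zero, One}" and q: "q \<noteq> 1"
  obtains q' st' where "op_move (set n \<subseteq> {One}) q st o' q' st'" and "run tree_pda q' st' w 2 []"
proof -
  from run_split_letter[OF run] obtain q1 st1 act q2 st2 where block: "run tree_pda q st n q1 st1"
    and trans: "(q1, Some o', act, q2) \<in> delta tree_pda" and act: "apply_op act st1 = Some st2"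
    and rest: "run tree_pda q2 st2 w 2 []"
    by blast
  from tree_pda_run_bits[OF block bits] trans act op q
  have "op_move (set n \<subseteq> {One}) q st o' q2 st2"
    by (auto simp: tree_pda_def intro: op_move.intros[simplified])
  then show thesis using rest by (rule that)
qed

section \<open>Counting the leaves of an accepted word\<close>

definition fresh_top :: "nat list \<Rightarrow> bool" where
  "fresh_top st \<longleftrightarrow> st = [] \<or> hd st = 0"

fun wf_stack :: "nat \<Rightarrow> nat list \<Rightarrow> bool" where
  "wf_stack N [] \<longleftrightarrow> True"
| "wf_stack N (x # st) \<longleftrightarrow>
     wf_stack N st \<and> (x = 0 \<or> x = 1 \<and> count_list st 0 < N \<and> fresh_top st)"

(* A 1 above d zeros marks a pending right subtree with 2^(N-d) leaves. *)
fun pending_leaves :: "nat \<Rightarrow> nat list \<Rightarrow> nat" where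
  "pending_leaves N [] = 0"
| "pending_leaves N (x # st) =
     (if x = 1 then 2 ^ (N - count_list st 0) else 0) + pending_leaves N st"

(* The configurations between operations of an accepting run: at a node about to be
   explored, between the two leaves of a node of depth N, and ascending. *)
definition live_config :: "nat \<Rightarrow> nat \<Rightarrow> nat list \<Rightarrow> nat \<Rightarrow> bool" where
  "live_config N q st v \<longleftrightarrow>
     q = 0 \<and> fresh_top st \<and> wf_stack N st \<and> count_list st 0 = v \<or>
     q = 0 \<and> v = N \<and> (\<exists>s. st = 1 # s \<and> fresh_top s \<and> wf_stack N s \<and> count_list s 0 = N) \<or>
     q = 2 \<and> wf_stack N st \<and> count_list st 0 = v"

(* Reached by reading more than two Gamma_2-letters at one node: neither inc nor dec nor the
   end of the word is possible any more. *)
definition stuck_config :: "nat \<Rightarrow> nat \<Rightarrow> nat list \<Rightarrow> nat \<Rightarrow> bool" where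
  "stuck_config N q st v \<longleftrightarrow>
     v = N \<and> (q = 0 \<and> (\<exists>s. st = 1 # 1 # s) \<or> q = 2 \<and> (\<exists>s. st = 1 # s))"

(* In state 0 with a 0 or nothing on top of the stack, the whole subtree of the current node,
   at depth v, is still to be visited. *)
definition remaining_leaves :: "nat \<Rightarrow> nat \<Rightarrow> nat list \<Rightarrow> nat \<Rightarrow> nat" where
  "remaining_leaves N q st v =
     (if q = 0 \<and> fresh_top st then 2 ^ (N + 1 - v) else 0) + pending_leaves N st"

lemma op_move_stuck:
  assumes "op_move full q st o' q' st'" and "stuck_config N q st v" and "op_val o' v \<le> N"
  shows "stuck_config N q' st' (op_val o' v)"
  using assms by (cases rule: op_move.cases) (auto simp: stuck_config_def)

lemma op_move_live:
  assumes "op_move full q st o' q' st'" and "live_config N q st v"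
    and "full \<Longrightarrow> v = N" and "op_val o' v \<le> N"
  shows "stuck_config N q' st' (op_val o' v) \<or>
         live_config N q' st' (op_val o' v) \<and>
         remaining_leaves N q st v = length (proj [o']) + remaining_leaves N q' st' (op_val o' v)"
  using assms
proof (cases rule: op_move.cases)
  case descend_left
  then have "v < N" "2 ^ (N + 1 - v) = 2 ^ (N - v) + (2 ^ (N - v) :: nat)"
    using assms(4) by (auto simp: Suc_diff_le)
  with descend_left assms(2) show ?thesis
    by (auto simp: live_config_def stuck_config_def remaining_leaves_def fresh_top_def)
qed (use assms in \<open>auto simp: live_config_def stuck_config_def remaining_leaves_def fresh_top_def\<close>)

lemma stuck_config_rejects:
  assumes "counter_walk l n ps n'" and "bitword l n"
    and "run tree_pda q st (n @ steps_word ps) 2 []" and "stuck_config (2 ^ l - 1) q st (val n)"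
  shows False
  using assms
proof (induction ps arbitrary: n q st)
  case Nil
  then show ?case
    using tree_pda_run_final[of q st n] by (auto simp: bitword_def stuck_config_def)
next
  case (Cons p ps)
  obtain o' m where p: "p = (o', m)"
    by fastforce
  with Cons.prems have step: "counter_step l n o' m" and walk: "counter_walk l m ps n'"
    by simp_all
  from Cons.prems(3) p have "run tree_pda q st (n @ o' # m @ steps_word ps) 2 []"
    by simp
  then obtain q' st' where move: "op_move (set n \<subseteq> {One}) q st o' q' st'"
    and run: "run tree_pda q' st' (m @ steps_word ps) 2 []"
    by (rule tree_pda_run_op)
      (use Cons.prems step in \<open>auto simp: bitword_def counter_step_def is_op_def stuck_config_def\<close>)
  from step have "bitword l m" "val m = op_val o' (val n)"
    by (simp_all add: counter_step_def)
  with move Cons.prems(4) have "stuck_config (2 ^ l - 1) q' st' (val m)"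
    using op_move_stuck val_bitword_le by metis
  with Cons.IH walk \<open>bitword l m\<close> run show False
    by blast
qed

lemma live_config_leaf_count:
  assumes "counter_walk l n ps n'" and "bitword l n"
    and "run tree_pda q st (n @ steps_word ps) 2 []" and "live_config (2 ^ l - 1) q st (val n)"
  shows "length (proj (steps_word ps)) = remaining_leaves (2 ^ l - 1) q st (val n)"
  using assms
proof (induction ps arbitrary: n q st)
  case Nil
  then show ?case
    using tree_pda_run_final[of q st n] by (auto simp: bitword_def remaining_leaves_def)
next
  case (Cons p ps)
  obtain o' m where p: "p = (o', m)"
    by fastforce
  with Cons.prems have step: "counter_step l n o' m" and walk: "counter_walk l m ps n'"
    by simp_all
  from Cons.prems(3) p have "run tree_pda q st (n @ o' # m @ steps_word ps) 2 []"
    by simp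
  then obtain q' st' where move: "op_move (set n \<subseteq> {One}) q st o' q' st'"
    and run: "run tree_pda q' st' (m @ steps_word ps) 2 []"
    by (rule tree_pda_run_op)
      (use Cons.prems step in \<open>auto simp: bitword_def counter_step_def is_op_def live_config_def\<close>)
  from step have m: "bitword l m" "val m = op_val o' (val n)"
    by (simp_all add: counter_step_def)
  from op_move_live[OF move Cons.prems(4)] m val_bitword_all_One[OF Cons.prems(2)]
    val_bitword_le[OF m(1)]
  have "stuck_config (2 ^ l - 1) q' st' (val m) \<or>
        live_config (2 ^ l - 1) q' st' (val m) \<and> remaining_leaves (2 ^ l - 1) q st (val n) =
          length (proj [o']) + remaining_leaves (2 ^ l - 1) q' st' (val m)"
    by simp
  moreover have "\<not> stuck_config (2 ^ l - 1) q' st' (val m)"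
    using stuck_config_rejects[OF walk m(1) run] by blast
  ultimately show ?case
    using Cons.IH[OF walk m(1) run] p m(1) proj_bits[of m] by (auto simp: bitword_def)
qed

lemma length_proj_accepted:
  assumes "w \<in> lang tree_pda \<inter> Lprime l"
  shows "length (proj w) = 2 ^ 2 ^ l"
proof -
  from assms obtain ps where w: "w = replicate l Zero @ steps_word ps"
    and walk: "counter_walk l (replicate l Zero) ps (replicate l Zero)"
    by (auto elim: Lprime_counter_walkE)
  from assms have "run tree_pda 0 [] (replicate l Zero @ steps_word ps) 2 []"
    by (simp add: lang_def tree_pda_def w)
  with walk have "length (proj (steps_word ps)) = remaining_leaves (2 ^ l - 1) 0 [] 0"
    using live_config_leaf_count[of l _ ps _ 0 "[]"]
    by (simp add: live_config_def fresh_top_def)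
  also have "\<dots> = 2 ^ 2 ^ l"
    by (simp add: remaining_leaves_def fresh_top_def)
  moreover have "proj (replicate l (Zero :: 'g letter)) = []"
    by (induction l) simp_all
  ultimately show ?thesis
    by (simp add: w)
qed

section \<open>Depth-first traversals\<close>

(* The depth-first traversal of the subtree of height h below a node of depth d, carrying the
   2^(h+1) letters gs on its leaves. *)
fun traversal :: "nat \<Rightarrow> nat \<Rightarrow> nat \<Rightarrow> 'g list \<Rightarrow> ('g letter \<times> 'g letter list) list" where
  "traversal l 0 d gs = [(G (gs ! 0), bin_word l d), (G (gs ! 1), bin_word l d)]"
| "traversal l (Suc h) d gs =
     (Inc, bin_word l (d + 1)) # traversal l h (d + 1) (take (2 ^ Suc h) gs) @
     [(Dec, bin_word l d), (Inc, bin_word l (d + 1))] @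
     traversal l h (d + 1) (drop (2 ^ Suc h) gs) @ [(Dec, bin_word l d)]"

lemma proj_traversal: "length gs = 2 ^ Suc h \<Longrightarrow> proj (steps_word (traversal l h d gs)) = gs"
proof (induction h arbitrary: d gs)
  case 0
  then obtain x y where "gs = [x, y]"
    by (auto simp: numeral_2_eq_2 length_Suc_conv)
  then show ?case by simp
next
  case (Suc h)
  then show ?case by (simp add: min_def)
qed

lemma counter_walk_traversal:
  fixes gs :: "'g list"
  shows "d + h = 2 ^ l - 1 \<Longrightarrow> counter_walk l (bin_word l d) (traversal l h d gs) (bin_word l d)"
proof (induction h arbitrary: d gs)
  case 0
  then show ?case
    by (simp add: counter_step_def bitword_bin_word is_op_def)
next
  case (Suc h)
  have "d + 1 < 2 ^ l"
    using Suc.prems zero_less_power[of 2 l] by linarith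
  then have down: "counter_walk l (bin_word l d) [(Inc, bin_word l (d + 1))] (bin_word l (d + 1))"
    and turn: "counter_walk l (bin_word l (d + 1)) [(Dec, bin_word l d), (Inc, bin_word l (d + 1))]
       (bin_word l (d + 1))"
    and up: "counter_walk l (bin_word l (d + 1)) [(Dec, bin_word l d)] (bin_word l d)"
    by (simp_all add: counter_step_def bitword_bin_word val_bin_word is_op_def)
  have sub: "counter_walk l (bin_word l (d + 1)) (traversal l h (d + 1) gs') (bin_word l (d + 1))"
    for gs' :: "'g list"
    using Suc by simp
  have "counter_walk l (bin_word l d)
     ([(Inc, bin_word l (d + 1))] @ traversal l h (d + 1) (take (2 ^ Suc h) gs) @
      [(Dec, bin_word l d), (Inc, bin_word l (d + 1))] @
      traversal l h (d + 1) (drop (2 ^ Suc h) gs) @ [(Dec, bin_word l d)]) (bin_word l d)"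
    by (intro counter_walk_append[OF down] counter_walk_append[OF sub]
        counter_walk_append[OF turn] up)
  then show ?case by simp
qed

lemma tree_pda_run_leaf:
  assumes "set n \<subseteq> {One}"
  shows "run tree_pda 0 st (n @ G a # n @ G b # n) 2 st"
proof -
  have ones: "run tree_pda 0 st' n 0 st'" for st'
    using assms by (rule tree_pda_run_loops(2))
  have "run tree_pda 2 st n 2 st"
    using assms by (intro tree_pda_run_loops(1)) auto
  then have "run tree_pda 0 (1 # st) (n @ G b # n) 2 st"
    by (intro run_append_letter[OF ones]) (auto simp: tree_pda_def)
  then show ?thesis
    by (intro run_append_letter[OF ones]) (auto simp: tree_pda_def)
qed

lemma tree_pda_run_node:
  assumes bits: "set n \<subseteq> {Zero, One}"
    and left: "\<And>st. run tree_pda 0 st u 2 st" and right: "\<And>st. run tree_pda 0 st v 2 st"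
  shows "run tree_pda 0 st (n @ Inc # u @ Dec # n @ Inc # v @ Dec # n) 2 st"
proof -
  have "run tree_pda 2 st n 2 st"
    using bits by (simp add: tree_pda_run_loops(1))
  then have "run tree_pda 2 (0 # st) (Dec # n) 2 st"
    using run_append_letter[OF run_nil] by (force simp: tree_pda_def)
  then have after_right: "run tree_pda 0 (0 # st) (v @ Dec # n) 2 st"
    by (rule run_append[OF right])
  have turn: "run tree_pda 2 (1 # st) n 1 st"
    using run_append[OF tree_pda_run_loops(1)[OF bits] run_eps[OF _ _ run_nil]]
    by (force simp: tree_pda_def)
  have "run tree_pda 2 (1 # st) (n @ Inc # v @ Dec # n) 2 st"
    by (rule run_append_letter[where op = "Push 0", OF turn _ _ after_right])
      (simp_all add: tree_pda_def)
  then have "run tree_pda 2 (0 # 1 # st) (Dec # n @ Inc # v @ Dec # n) 2 st"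
    using run_append_letter[OF run_nil] by (force simp: tree_pda_def)
  then have after_left: "run tree_pda 0 (0 # 1 # st) (u @ Dec # n @ Inc # v @ Dec # n) 2 st"
    by (rule run_append[OF left])
  have down: "run tree_pda 0 st n 1 (1 # st)"
    using run_eps[OF _ _ tree_pda_run_loops(1)[OF bits]] by (force simp: tree_pda_def)
  show ?thesis
    by (rule run_append_letter[where op = "Push 0", OF down _ _ after_left])
      (simp_all add: tree_pda_def)
qed

lemma run_traversal:
  fixes gs :: "'g list"
  shows "d + h = 2 ^ l - 1 \<Longrightarrow>
    run tree_pda 0 st (bin_word l d @ steps_word (traversal l h d gs)) 2 st"
proof (induction h arbitrary: d gs st)
  case 0
  then have "(bin_word l d :: 'g letter list) = replicate l One"
    using bitword_val_inject[of l "bin_word l d" "replicate l One"]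
    by (simp add: bitword_bin_word val_bin_word)
  then have "set (bin_word l d :: 'g letter list) \<subseteq> {One}"
    by (simp add: set_replicate_conv_if)
  from tree_pda_run_leaf[OF this] show ?case
    by simp
next
  case (Suc h)
  have subtree: "run tree_pda 0 st'
      (bin_word l (d + 1) @ steps_word (traversal l h (d + 1) gs')) 2 st'" for st' and gs' :: "'g list"
    using Suc by simp
  show ?case
    using tree_pda_run_node[OF set_bin_word subtree subtree] by simp
qed

lemma proj_accepted_surj:
  fixes u :: "'g list"
  assumes "length u = 2 ^ 2 ^ l"
  shows "u \<in> proj ` (lang tree_pda \<inter> Lprime l)"
proof -
  let ?w = "bin_word l 0 @ steps_word (traversal l (2 ^ l - 1) 0 u)"
  have "proj ?w = u"
    using assms proj_traversal[of u "2 ^ l - 1"] by simp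
  moreover have "?w \<in> lang tree_pda"
    using run_traversal[of 0 "2 ^ l - 1" l "[]" u] by (simp add: lang_def tree_pda_def)
  moreover have "?w \<in> Lprime l"
    using counter_walk_in_Lprime counter_walk_traversal[of 0 "2 ^ l - 1" l u]
    by (simp add: bin_word_zero)
  ultimately show ?thesis
    by (intro image_eqI[of u proj ?w]) auto
qed

theorem claim4p9:
  fixes l :: nat
  shows "\<exists>A :: (nat, nat, 'g::finite letter) pda.
           pda_wf A \<and> card (states A) = 3 \<and> card (stack_alph A) = 2 \<and>
           proj ` (lang A \<inter> Lprime l) = {u :: 'g list. length u = 2 ^ (2 ^ l)}"
proof (intro exI conjI)
  show "pda_wf tree_pda"
    by (rule tree_pda_wf)
  show "card (states tree_pda) = 3" "card (stack_alph tree_pda) = 2"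
    by (simp_all add: tree_pda_def)
  show "proj ` (lang tree_pda \<inter> Lprime l) = {u :: 'g list. length u = 2 ^ (2 ^ l)}"
    using length_proj_accepted proj_accepted_surj by blast
qed

end
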